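(* Given the ability to perform incoherent unitaries and $k$ Hadamard gates (or generalised controlled Hadamards), computational basis measurements and classical control, then even with access to an arbitrary ancillary state $|\gamma\rangle$, it is impossible to implement $n$ Hadamards $H^{\otimes n}$ exactly (deterministically) for $n>k$.
   Context: Fix the computational basis. A unitary is incoherent if it has the form $U=\sum_x e^{i\theta_x}|\pi(x)\rangle\langle x|$ for real $\theta_x$ and a permutation $\pi$. A generalised controlled-$W$ gate is $\sum_{x\in S}|x\rangle\langle x|\otimes W+\sum_{y\in S^c}|y\rangle\langle y|\otimes I$ for some subset $S$ of bitstrings. Such operations are modelled as channels $\rho\mapsto\mathrm{Tr}_2\big(U(\rho\otimes|\gamma\rangle\langle\gamma|)U^\dagger\big)$ with $U=U_kV_k\cdots U_1V_1U_0$, where the $U_i$ are incoherent unitaries and the $V_i$ are (generalised controlled) Hadamards. *)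

theory Defs
  imports Complex_Main
begin

text \<open>A register of N qubits is indexed by the computational basis
  bitstrings, encoded as naturals i < 2^N; qubit t of i is (i div 2^t) mod 2.
  Operators are matrices nat \<Rightarrow> nat \<Rightarrow> complex of which only the entries
  with indices < 2^N matter. On the joint system (n data qubits, m ancilla qubits)
  the basis state |x> (x) |y> has index x * 2^m + y.\<close>

type_synonym cmat = "nat \<Rightarrow> nat \<Rightarrow> complex"

definition mmult :: "nat \<Rightarrow> cmat \<Rightarrow> cmat \<Rightarrow> cmat" where
  "mmult d A B = (\<lambda>i j. \<Sum>l<d. A i l * B l j)"

definition bit_of :: "nat \<Rightarrow> nat \<Rightarrow> nat" where
  "bit_of t i = (i div 2 ^ t) mod 2"

definition incoherent :: "nat \<Rightarrow> cmat \<Rightarrow> bool" where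
  "incoherent N U \<longleftrightarrow> (\<exists>\<pi> \<theta>. bij_betw \<pi> {..<2^N} {..<2^N} \<and>
     (\<forall>i<2^N. \<forall>j<2^N. U i j = (if i = \<pi> j then cis (\<theta> j) else 0)))"

text \<open>Generalised controlled Hadamard with target qubit t, controlled by the set S of
  bitstrings of the remaining qubits (encoded as the index with bit t cleared):
  sum_{x in S} |x><x| (x) H + sum_{y notin S} |y><y| (x) I.  (S = everything gives a
  plain Hadamard on qubit t.)\<close>
definition ctrl_had :: "nat \<Rightarrow> nat set \<Rightarrow> cmat" where
  "ctrl_had t S = (\<lambda>i j.
     let ci = i - bit_of t i * 2 ^ t; cj = j - bit_of t j * 2 ^ t in
     if ci \<noteq> cj then 0
     else if ci \<in> S then (-1) ^ (bit_of t i * bit_of t j) / complex_of_real (sqrt 2)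
     else (if i = j then 1 else 0))"

definition gen_ctrl_hadamard :: "nat \<Rightarrow> cmat \<Rightarrow> bool" where
  "gen_ctrl_hadamard N V \<longleftrightarrow> (\<exists>t<N. \<exists>S. \<forall>i<2^N. \<forall>j<2^N. V i j = ctrl_had t S i j)"

text \<open>The circuit U = U_k V_k ... U_1 V_1 U_0, given U_0 and the list of pairs
  (V_1,U_1), ..., (V_k,U_k).\<close>
primrec circ :: "nat \<Rightarrow> cmat \<Rightarrow> (cmat \<times> cmat) list \<Rightarrow> cmat" where
  "circ d A [] = A"
| "circ d A (p # ps) = circ d (mmult d (snd p) (mmult d (fst p) A)) ps"

text \<open>The channel rho |-> Tr_2 (U (rho (x) |gamma><gamma|) U^dagger), n data qubits,
  m ancilla qubits.\<close>
definition channel :: "nat \<Rightarrow> nat \<Rightarrow> (nat \<Rightarrow> complex) \<Rightarrow> cmat \<Rightarrow> cmat \<Rightarrow> cmat" where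
  "channel n m \<gamma> U \<rho> = (\<lambda>x x'.
     let D = 2 ^ (n + m);
         \<sigma> = (\<lambda>a b. \<rho> (a div 2 ^ m) (b div 2 ^ m) * \<gamma> (a mod 2 ^ m) * cnj (\<gamma> (b mod 2 ^ m)))
     in \<Sum>y<2 ^ m. \<Sum>a<D. \<Sum>b<D. U (x * 2 ^ m + y) a * \<sigma> a b * cnj (U (x' * 2 ^ m + y) b))"

definition hadamard_n :: "nat \<Rightarrow> cmat" where
  "hadamard_n n = (\<lambda>x y. (-1) ^ (\<Sum>t<n. bit_of t x * bit_of t y) / complex_of_real (sqrt (2 ^ n)))"

definition hadamard_conj :: "nat \<Rightarrow> cmat \<Rightarrow> cmat" where
  "hadamard_conj n \<rho> = (\<lambda>x x'. \<Sum>a<2^n. \<Sum>b<2^n.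
      hadamard_n n x a * \<rho> a b * cnj (hadamard_n n x' b))"

definition density :: "nat \<Rightarrow> cmat \<Rightarrow> bool" where
  "density n \<rho> \<longleftrightarrow>
     (\<forall>v :: nat \<Rightarrow> complex. let q = (\<Sum>i<2^n. \<Sum>j<2^n. cnj (v i) * \<rho> i j * v j)
        in Im q = 0 \<and> Re q \<ge> 0) \<and>
     (\<Sum>i<2^n. \<rho> i i) = 1"

end

theory Submission
  imports Defs
begin

(* Suppose the circuit unitary W, with k (generalised controlled) Hadamards, implemented H^n exactly.
   Since H^n|0><0|H^n = |+><+|^n is pure, W maps |0>|gamma> to |+>^n |phi> for some ancilla
   vector phi; since H^n|+><+|^nH^n = |0><0| and W preserves inner products, W maps |+>^n|gamma>
   to |0> (sqrt(2^n) phi) (equality case of Cauchy-Schwarz). Incoherent unitaries preserve the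
   l1 norm and a controlled Hadamard changes it by a factor of at most sqrt 2 in either direction,
   so 2^n |phi|_1 <= 2^(k/2) |gamma|_1 and |gamma|_1 <= 2^(k/2) |phi|_1, whence 2^n <= 2^k. *)

definition mat_vec :: "nat \<Rightarrow> cmat \<Rightarrow> (nat \<Rightarrow> complex) \<Rightarrow> nat \<Rightarrow> complex" where
  "mat_vec d A v = (\<lambda>i. \<Sum>j<d. A i j * v j)"

definition norm1 :: "nat \<Rightarrow> (nat \<Rightarrow> complex) \<Rightarrow> real" where
  "norm1 d v = (\<Sum>i<d. cmod (v i))"

definition cinner :: "nat \<Rightarrow> (nat \<Rightarrow> complex) \<Rightarrow> (nat \<Rightarrow> complex) \<Rightarrow> complex" where
  "cinner d u v = (\<Sum>i<d. cnj (u i) * v i)"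

definition vec_tensor :: "nat \<Rightarrow> (nat \<Rightarrow> complex) \<Rightarrow> (nat \<Rightarrow> complex) \<Rightarrow> nat \<Rightarrow> complex" where
  "vec_tensor M u v = (\<lambda>a. u (a div M) * v (a mod M))"

definition outer :: "(nat \<Rightarrow> complex) \<Rightarrow> cmat" where
  "outer u = (\<lambda>a b. u a * cnj (u b))"

definition preserves_cinner :: "nat \<Rightarrow> cmat \<Rightarrow> bool" where
  "preserves_cinner d A \<longleftrightarrow> (\<forall>u v. cinner d (mat_vec d A u) (mat_vec d A v) = cinner d u v)"

definition l1_distortion_le :: "nat \<Rightarrow> cmat \<Rightarrow> real \<Rightarrow> bool" where
  "l1_distortion_le d A c \<longleftrightarrow>
     (\<forall>v. norm1 d (mat_vec d A v) \<le> c * norm1 d v \<and> norm1 d v \<le> c * norm1 d (mat_vec d A v))"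

lemma sum_lessThan_mult:
  fixes g :: "nat \<Rightarrow> 'a::comm_monoid_add"
  shows "(\<Sum>i<P * M. g i) = (\<Sum>x<P. \<Sum>y<M. g (x * M + y))"
proof -
  have "(\<Sum>i\<in>{x * M..<x * M + M}. g i) = (\<Sum>y<M. g (x * M + y))" for x
    using sum.shift_bounds_nat_ivl[of g 0 "x * M" M] by (simp add: atLeast0LessThan add.commute)
  then show ?thesis
    using sum.nat_group[of g M P] by simp
qed

lemma sum_supported_at_0:
  fixes g :: "nat \<Rightarrow> 'a::comm_monoid_add"
  assumes "\<And>i. 0 < i \<Longrightarrow> i < d \<Longrightarrow> g i = 0" and "0 < d"
  shows "(\<Sum>i<d. g i) = g 0"
  using sum.mono_neutral_right[of "{..<d}" "{0}" g] assms by auto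

lemma sum_lessThan_mult_first_block:
  fixes g :: "nat \<Rightarrow> 'a::comm_monoid_add"
  assumes "\<And>x y. 0 < x \<Longrightarrow> x < P \<Longrightarrow> y < M \<Longrightarrow> g (x * M + y) = 0" and "0 < P"
  shows "(\<Sum>i<P * M. g i) = (\<Sum>y<M. g y)"
  unfolding sum_lessThan_mult using assms
  by (subst sum_supported_at_0[where g = "\<lambda>x. \<Sum>y<M. g (x * M + y)"]) simp_all

lemma mat_vec_mmult: "mat_vec d (mmult d A B) v = mat_vec d A (mat_vec d B v)"
  unfolding mat_vec_def mmult_def
  by (auto simp: sum_distrib_left sum_distrib_right mult.assoc intro: sum.swap)

lemma cinner_self: "cinner d v v = complex_of_real (\<Sum>i<d. (cmod (v i))\<^sup>2)"
  unfolding cinner_def of_real_sum by (intro sum.cong refl) (metis complex_norm_square mult.commute)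

lemma cnj_cinner: "cnj (cinner d u v) = cinner d v u"
  unfolding cinner_def by (simp add: mult.commute)

lemma eq_if_cinner_eq:
  assumes "cinner d f f = c" "cinner d g g = c" "cinner d f g = c" "c \<in> \<real>" and "i < d"
  shows "f i = g i"
proof -
  have "cinner d g f = c"
    using assms(3,4) by (metis cnj_cinner Reals_cnj_iff)
  then have "cinner d (\<lambda>i. f i - g i) (\<lambda>i. f i - g i) = 0"
    using assms(1-3) unfolding cinner_def by (simp add: algebra_simps sum.distrib sum_subtractf)
  then have "(\<Sum>i<d. (cmod (f i - g i))\<^sup>2) = 0"
    unfolding cinner_self of_real_eq_0_iff .
  then show ?thesis
    using assms(5) by (simp add: sum_nonneg_eq_0_iff)
qed

lemma norm1_vec_tensor: "norm1 (P * M) (vec_tensor M u v) = norm1 P u * norm1 M v"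
  unfolding norm1_def vec_tensor_def sum_lessThan_mult sum_product
  by (auto simp: norm_mult intro!: sum.cong)

lemma cinner_vec_tensor:
  "cinner (P * M) (vec_tensor M u v) (vec_tensor M u' v') = cinner P u u' * cinner M v v'"
  unfolding cinner_def vec_tensor_def sum_lessThan_mult sum_product
  by (auto simp: mult_ac intro!: sum.cong)

lemma preserves_cinner_mmult:
  "preserves_cinner d A \<Longrightarrow> preserves_cinner d B \<Longrightarrow> preserves_cinner d (mmult d B A)"
  unfolding preserves_cinner_def by (simp add: mat_vec_mmult)

lemma l1_distortion_le_mmult:
  assumes "l1_distortion_le d A a" "l1_distortion_le d B b" "0 \<le> a" "0 \<le> b"
  shows "l1_distortion_le d (mmult d B A) (b * a)"
  unfolding l1_distortion_le_def mat_vec_mmult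
proof
  fix v
  have A: "norm1 d (mat_vec d A v) \<le> a * norm1 d v" "norm1 d v \<le> a * norm1 d (mat_vec d A v)"
    using assms(1) unfolding l1_distortion_le_def by auto
  have B: "norm1 d (mat_vec d B (mat_vec d A v)) \<le> b * norm1 d (mat_vec d A v)"
    "norm1 d (mat_vec d A v) \<le> b * norm1 d (mat_vec d B (mat_vec d A v))"
    using assms(2) unfolding l1_distortion_le_def by auto
  show "norm1 d (mat_vec d B (mat_vec d A v)) \<le> b * a * norm1 d v \<and>
        norm1 d v \<le> b * a * norm1 d (mat_vec d B (mat_vec d A v))"
    using order_trans[OF B(1) mult_left_mono[OF A(1) assms(4)]]
      order_trans[OF A(2) mult_left_mono[OF B(2) assms(3)]]
    by (simp_all add: mult_ac)
qed

lemma incoherentE: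
  assumes "incoherent N U"
  obtains \<pi> \<theta> where "bij_betw \<pi> {..<2^N} {..<2^N}"
    and "\<And>w j. j < 2^N \<Longrightarrow> mat_vec (2^N) U w (\<pi> j) = cis (\<theta> j) * w j"
proof -
  obtain \<pi> \<theta> where bij: "bij_betw \<pi> {..<2^N} {..<(2::nat)^N}"
    and U: "\<forall>i<2^N. \<forall>j<2^N. U i j = (if i = \<pi> j then cis (\<theta> j) else 0)"
    using assms unfolding incoherent_def by blast
  have "mat_vec (2^N) U w (\<pi> j) = cis (\<theta> j) * w j" if "j < 2^N" for w j
  proof -
    have "mat_vec (2^N) U w (\<pi> j) = (\<Sum>l<2^N. if l = j then cis (\<theta> l) * w l else 0)"
      unfolding mat_vec_def
    proof (intro sum.cong refl)
      fix l assume "l \<in> {..<(2::nat)^N}"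
      moreover have "\<pi> j < 2^N" "\<pi> j = \<pi> l \<longleftrightarrow> j = l"
        using that \<open>l \<in> {..<2^N}\<close> bij by (auto simp: bij_betw_def inj_on_def)
      ultimately show "U (\<pi> j) l * w l = (if l = j then cis (\<theta> l) * w l else 0)"
        using U by auto
    qed
    then show ?thesis
      using that by simp
  qed
  then show thesis
    using that bij by blast
qed

lemma incoherent_preserves_cinner:
  assumes "incoherent N U"
  shows "preserves_cinner (2^N) U"
  unfolding preserves_cinner_def
proof (intro allI)
  fix u v
  obtain \<pi> \<theta> where bij: "bij_betw \<pi> {..<2^N} {..<2^N}"
    and U: "\<And>w j. j < 2^N \<Longrightarrow> mat_vec (2^N) U w (\<pi> j) = cis (\<theta> j) * w j"
    using incoherentE[OF assms] by blast
  have "cinner (2^N) (mat_vec (2^N) U u) (mat_vec (2^N) U v)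
      = (\<Sum>j<2^N. cnj (cis (\<theta> j) * u j) * (cis (\<theta> j) * v j))"
    unfolding cinner_def by (subst sum.reindex_bij_betw[OF bij, symmetric]) (simp add: U)
  also have "\<dots> = cinner (2^N) u v"
    unfolding cinner_def
  proof (intro sum.cong refl)
    fix j
    have "cnj (cis (\<theta> j) * u j) * (cis (\<theta> j) * v j) = (cnj (cis (\<theta> j)) * cis (\<theta> j)) * (cnj (u j) * v j)"
      by (simp only: complex_cnj_mult mult_ac)
    then show "cnj (cis (\<theta> j) * u j) * (cis (\<theta> j) * v j) = cnj (u j) * v j"
      by (simp add: cis_cnj cis_mult)
  qed
  finally show "cinner (2^N) (mat_vec (2^N) U u) (mat_vec (2^N) U v) = cinner (2^N) u v" .
qed

lemma incoherent_norm1: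
  assumes "incoherent N U"
  shows "norm1 (2^N) (mat_vec (2^N) U v) = norm1 (2^N) v"
proof -
  obtain \<pi> \<theta> where bij: "bij_betw \<pi> {..<2^N} {..<2^N}"
    and U: "\<And>w j. j < 2^N \<Longrightarrow> mat_vec (2^N) U w (\<pi> j) = cis (\<theta> j) * w j"
    using incoherentE[OF assms] by blast
  show ?thesis
    unfolding norm1_def by (subst sum.reindex_bij_betw[OF bij, symmetric]) (simp add: U norm_mult)
qed

lemma incoherent_l1_distortion_le: "incoherent N U \<Longrightarrow> l1_distortion_le (2^N) U 1"
  unfolding l1_distortion_le_def by (simp add: incoherent_norm1)

lemma bit_of_pair_base:
  fixes q r :: nat
  assumes "r < 2^t"
  shows "bit_of t (q * 2^Suc t + r) = 0"
proof -
  have "(q * 2^Suc t + r) div 2^t = 2 * q"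
    using assms by (simp add: div_add1_eq mult_ac)
  then show ?thesis
    unfolding bit_of_def by simp
qed

lemma bit_of_add_pow: "bit_of t c = 0 \<Longrightarrow> bit_of t (c + 2^t) = 1"
  unfolding bit_of_def by (simp add: mod_Suc)

lemma bit_of_times_pow_le: "bit_of t j * 2^t \<le> j"
proof -
  have "bit_of t j * 2^t \<le> j div 2^t * 2^t"
    unfolding bit_of_def by (intro mult_right_mono) simp_all
  also have "\<dots> \<le> j"
    by (rule div_times_less_eq_dividend)
  finally show ?thesis .
qed

lemma sum_pow2_pairs:
  fixes g :: "nat \<Rightarrow> 'a::comm_monoid_add"
  assumes "t < N"
  shows "(\<Sum>i<2^N. g i) =
    (\<Sum>q<2^(N - Suc t). \<Sum>r<2^t. g (q * 2^Suc t + r) + g (q * 2^Suc t + r + 2^t))"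
proof -
  have N: "(2::nat)^N = 2^(N - Suc t) * 2^Suc t"
    using assms by (metis Suc_leI le_add_diff_inverse2 power_add)
  have pair: "(\<Sum>j<2^Suc t. g (q * 2^Suc t + j)) =
      (\<Sum>r<2^t. g (q * 2^Suc t + r) + g (q * 2^Suc t + r + 2^t))" for q
  proof -
    have "(\<Sum>j<2^Suc t. g (q * 2^Suc t + j)) = (\<Sum>j<2 * 2^t. g (q * 2^Suc t + j))"
      by (simp only: power_Suc)
    also have "\<dots> = (\<Sum>b<2. \<Sum>r<2^t. g (q * 2^Suc t + (b * 2^t + r)))"
      by (rule sum_lessThan_mult)
    also have "\<dots> = (\<Sum>r<2^t. g (q * 2^Suc t + r) + g (q * 2^Suc t + r + 2^t))"
      unfolding lessThan_nat_numeral pred_numeral_simps lessThan_Suc lessThan_0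
      by (simp add: sum.distrib add.assoc add.commute[of "2^t"]) (rule add.commute)
    finally show ?thesis .
  qed
  show ?thesis
    by (simp only: N sum_lessThan_mult pair)
qed

lemma pow2_pair_bounds:
  fixes q r :: nat
  assumes "q < 2^(N - Suc t)" "r < 2^t" "t < N"
  shows "q * 2^Suc t + r + 2^t < 2^N"
proof -
  have "q * 2^Suc t + r + 2^t < (q + 1) * 2^Suc t"
    using assms(2) by simp
  also have "\<dots> \<le> 2^(N - Suc t) * 2^Suc t"
    using assms(1) by (intro mult_right_mono) auto
  also have "\<dots> = 2^N"
    using assms(3) by (metis Suc_leI le_add_diff_inverse2 power_add)
  finally show ?thesis .
qed

lemma mat_vec_ctrl_had:
  assumes c: "bit_of t c = 0" "c + 2^t < 2^N"
    and V: "\<forall>i<2^N. \<forall>j<2^N. V i j = ctrl_had t S i j"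
  shows "mat_vec (2^N) V v c =
      (if c \<in> S then (v c + v (c + 2^t)) / complex_of_real (sqrt 2) else v c)"
    and "mat_vec (2^N) V v (c + 2^t) =
      (if c \<in> S then (v c - v (c + 2^t)) / complex_of_real (sqrt 2) else v (c + 2^t))"
proof -
  have bit1: "bit_of t (c + 2^t) = 1"
    using c(1) by (rule bit_of_add_pow)
  \<comment> \<open>\<open>ctrl_had t S\<close> only couples indices that agree after clearing bit \<open>t\<close>.\<close>
  have block: "mat_vec (2^N) V v i = V i c * v c + V i (c + 2^t) * v (c + 2^t)"
    if i: "i \<in> {c, c + 2^t}" for i
  proof -
    have "V i j = 0" if j: "j < 2^N" "j \<notin> {c, c + 2^t}" for j
    proof -
      have "j \<noteq> c + bit_of t j * 2^t"
        using j(2) bit_of_def by (cases "bit_of t j = 0") auto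
      then have "j - bit_of t j * 2^t \<noteq> c"
        using bit_of_times_pow_le[of t j] by linarith
      then show ?thesis
        using i j(1) c V bit1 less_trans[OF _ c(2)] unfolding ctrl_had_def by auto
    qed
    then have "mat_vec (2^N) V v i = (\<Sum>j\<in>{c, c + 2^t}. V i j * v j)"
      unfolding mat_vec_def using c(2) by (intro sum.mono_neutral_right) auto
    then show ?thesis
      by simp
  qed
  show "mat_vec (2^N) V v c =
      (if c \<in> S then (v c + v (c + 2^t)) / complex_of_real (sqrt 2) else v c)"
    using block[of c] c V bit1 less_trans[OF _ c(2)]
    by (auto simp: ctrl_had_def add_divide_distrib)
  show "mat_vec (2^N) V v (c + 2^t) =
      (if c \<in> S then (v c - v (c + 2^t)) / complex_of_real (sqrt 2) else v (c + 2^t))"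
    using block[of "c + 2^t"] c V bit1 less_trans[OF _ c(2)]
    by (auto simp: ctrl_had_def diff_divide_distrib)
qed

lemma cmod_div_sqrt2: "cmod (z / complex_of_real (sqrt 2)) = cmod z / sqrt 2"
  unfolding norm_divide by simp

lemma hadamard2_norm1_le:
  fixes a b :: complex
  shows "cmod ((a + b) / complex_of_real (sqrt 2)) + cmod ((a - b) / complex_of_real (sqrt 2))
    \<le> sqrt 2 * (cmod a + cmod b)"
proof -
  have "cmod ((a + b) / complex_of_real (sqrt 2)) + cmod ((a - b) / complex_of_real (sqrt 2))
      = (cmod (a + b) + cmod (a - b)) / sqrt 2"
    unfolding cmod_div_sqrt2 by (rule add_divide_distrib[symmetric])
  also have "\<dots> \<le> 2 * (cmod a + cmod b) / sqrt 2"
    using norm_triangle_ineq[of a b] norm_triangle_ineq4[of a b] by (intro divide_right_mono) simp_all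
  also have "\<dots> = sqrt 2 * (cmod a + cmod b)"
    by (metis real_div_sqrt times_divide_eq_left zero_le_numeral)
  finally show ?thesis .
qed

lemma norm1_le_hadamard2:
  fixes a b :: complex
  shows "cmod a + cmod b
    \<le> sqrt 2 * (cmod ((a + b) / complex_of_real (sqrt 2)) + cmod ((a - b) / complex_of_real (sqrt 2)))"
proof -
  have "(a + b) + (a - b) = 2 * a" "(a + b) - (a - b) = 2 * b"
    by simp_all
  then have "2 * cmod a \<le> cmod (a + b) + cmod (a - b)" "2 * cmod b \<le> cmod (a + b) + cmod (a - b)"
    using norm_triangle_ineq[of "a + b" "a - b"] norm_triangle_ineq4[of "a + b" "a - b"]
    by (simp_all add: norm_mult)
  moreover have "sqrt 2 * (cmod (a + b) / sqrt 2 + cmod (a - b) / sqrt 2) = cmod (a + b) + cmod (a - b)"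
    by (simp add: distrib_left)
  ultimately show ?thesis
    unfolding cmod_div_sqrt2 by linarith
qed

lemma hadamard2_cinner:
  fixes a b e f :: complex
  shows "cnj ((a + b) / complex_of_real (sqrt 2)) * ((e + f) / complex_of_real (sqrt 2))
      + cnj ((a - b) / complex_of_real (sqrt 2)) * ((e - f) / complex_of_real (sqrt 2))
    = cnj a * e + cnj b * f"
proof -
  define h where "h = complex_of_real (sqrt 2)"
  have cnj_h: "cnj h = h"
    unfolding h_def by simp
  have hh: "h * h = 2"
    unfolding h_def by (simp flip: of_real_mult)
  have sum: "(cnj a + cnj b) * (e + f) + (cnj a - cnj b) * (e - f) = 2 * (cnj a * e + cnj b * f)"
    by algebra
  have "cnj ((a + b) / h) * ((e + f) / h) + cnj ((a - b) / h) * ((e - f) / h)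
      = inverse (h * h) * ((cnj a + cnj b) * (e + f) + (cnj a - cnj b) * (e - f))"
    unfolding divide_inverse complex_cnj_mult complex_cnj_inverse complex_cnj_add complex_cnj_diff cnj_h
    by (simp add: algebra_simps)
  also have "\<dots> = inverse 2 * (2 * (cnj a * e + cnj b * f))"
    by (simp only: hh sum)
  also have "\<dots> = cnj a * e + cnj b * f"
    by simp
  finally have "cnj ((a + b) / h) * ((e + f) / h) + cnj ((a - b) / h) * ((e - f) / h)
      = cnj a * e + cnj b * f" .
  then show ?thesis
    unfolding h_def .
qed
lemma gen_ctrl_hadamard_preserves_cinner:
  assumes "gen_ctrl_hadamard N V"
  shows "preserves_cinner (2^N) V"
  unfolding preserves_cinner_def
proof (intro allI)
  fix u v
  obtain t S where t: "t < N" and V: "\<forall>i<2^N. \<forall>j<2^N. V i j = ctrl_had t S i j"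
    using assms unfolding gen_ctrl_hadamard_def by blast
  let ?Vu = "mat_vec (2^N) V u" and ?Vv = "mat_vec (2^N) V v"
  have pair: "cnj (?Vu c) * ?Vv c + cnj (?Vu (c + 2^t)) * ?Vv (c + 2^t)
      = cnj (u c) * v c + cnj (u (c + 2^t)) * v (c + 2^t)"
    if c: "bit_of t c = 0" "c + 2^t < 2^N" for c
    by (cases "c \<in> S") (simp_all only: mat_vec_ctrl_had[OF c V] if_True if_False hadamard2_cinner)
  show "cinner (2^N) ?Vu ?Vv = cinner (2^N) u v"
    unfolding cinner_def sum_pow2_pairs[OF t]
    by (intro sum.cong refl pair bit_of_pair_base pow2_pair_bounds[OF _ _ t]; simp)
qed

lemma gen_ctrl_hadamard_l1_distortion_le:
  assumes "gen_ctrl_hadamard N V"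
  shows "l1_distortion_le (2^N) V (sqrt 2)"
  unfolding l1_distortion_le_def
proof (intro allI conjI)
  fix v
  obtain t S where t: "t < N" and V: "\<forall>i<2^N. \<forall>j<2^N. V i j = ctrl_had t S i j"
    using assms unfolding gen_ctrl_hadamard_def by blast
  let ?Vv = "mat_vec (2^N) V v"
  have le_sqrt2: "x \<le> sqrt 2 * x" if "0 \<le> x" for x :: real
    using that by (simp add: mult_le_cancel_right1)
  have pair: "cmod (?Vv c) + cmod (?Vv (c + 2^t)) \<le> sqrt 2 * (cmod (v c) + cmod (v (c + 2^t))) \<and>
      cmod (v c) + cmod (v (c + 2^t)) \<le> sqrt 2 * (cmod (?Vv c) + cmod (?Vv (c + 2^t)))"
    if c: "bit_of t c = 0" "c + 2^t < 2^N" for c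
  proof (cases "c \<in> S")
    case True
    then show ?thesis
      unfolding mat_vec_ctrl_had[OF c V] using hadamard2_norm1_le norm1_le_hadamard2 by simp
  next
    case False
    then show ?thesis
      unfolding mat_vec_ctrl_had[OF c V] by (simp add: le_sqrt2)
  qed
  show "norm1 (2^N) ?Vv \<le> sqrt 2 * norm1 (2^N) v" "norm1 (2^N) v \<le> sqrt 2 * norm1 (2^N) ?Vv"
    unfolding norm1_def sum_pow2_pairs[OF t] sum_distrib_left
    by (intro sum_mono pair[THEN conjunct1] pair[THEN conjunct2] bit_of_pair_base
        pow2_pair_bounds[OF _ _ t]; simp)+
qed

lemma circ_preserves_cinner:
  assumes "preserves_cinner (2^N) A"
    and "\<forall>p\<in>set ps. gen_ctrl_hadamard N (fst p) \<and> incoherent N (snd p)"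
  shows "preserves_cinner (2^N) (circ (2^N) A ps)"
  using assms
  by (induction ps arbitrary: A)
    (simp_all add: preserves_cinner_mmult gen_ctrl_hadamard_preserves_cinner incoherent_preserves_cinner)

lemma circ_l1_distortion_le:
  assumes "l1_distortion_le (2^N) A c" "0 \<le> c"
    and "\<forall>p\<in>set ps. gen_ctrl_hadamard N (fst p) \<and> incoherent N (snd p)"
  shows "l1_distortion_le (2^N) (circ (2^N) A ps) (sqrt 2 ^ length ps * c)"
  using assms
proof (induction ps arbitrary: A c)
  case Nil
  then show ?case by simp
next
  case (Cons p ps)
  have "l1_distortion_le (2^N) (mmult (2^N) (snd p) (mmult (2^N) (fst p) A)) (1 * (sqrt 2 * c))"
    using Cons.prems
    by (intro l1_distortion_le_mmult incoherent_l1_distortion_le gen_ctrl_hadamard_l1_distortion_le)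
      simp_all
  then show ?case
    using Cons.IH[of _ "sqrt 2 * c"] Cons.prems by (simp add: mult_ac)
qed

lemma channel_outer:
  fixes n m :: nat and \<gamma> u :: "nat \<Rightarrow> complex" and W :: cmat
  defines "w \<equiv> mat_vec (2^(n+m)) W (vec_tensor (2^m) u \<gamma>)"
  shows "channel n m \<gamma> W (outer u) x x' =
    cinner (2^m) (\<lambda>y. w (x' * 2^m + y)) (\<lambda>y. w (x * 2^m + y))"
proof -
  let ?v = "vec_tensor (2^m) u \<gamma>"
  have "(\<Sum>a<2^(n+m). \<Sum>b<2^(n+m). W (x * 2^m + y) a *
        (outer u (a div 2^m) (b div 2^m) * \<gamma> (a mod 2^m) * cnj (\<gamma> (b mod 2^m))) *
        cnj (W (x' * 2^m + y) b))
      = cnj (w (x' * 2^m + y)) * w (x * 2^m + y)" for y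
  proof -
    have "(\<Sum>a<2^(n+m). \<Sum>b<2^(n+m). W (x * 2^m + y) a *
          (outer u (a div 2^m) (b div 2^m) * \<gamma> (a mod 2^m) * cnj (\<gamma> (b mod 2^m))) *
          cnj (W (x' * 2^m + y) b))
        = (\<Sum>a<2^(n+m). \<Sum>b<2^(n+m). (W (x * 2^m + y) a * ?v a) * (cnj (W (x' * 2^m + y) b) * cnj (?v b)))"
      by (simp add: outer_def vec_tensor_def mult_ac)
    also have "\<dots> = (\<Sum>a<2^(n+m). W (x * 2^m + y) a * ?v a) * (\<Sum>b<2^(n+m). cnj (W (x' * 2^m + y) b) * cnj (?v b))"
      by (rule sum_product[symmetric])
    also have "\<dots> = cnj (w (x' * 2^m + y)) * w (x * 2^m + y)"
      unfolding w_def mat_vec_def by (simp add: cnj_sum mult.commute)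
    finally show ?thesis .
  qed
  then show ?thesis
    unfolding channel_def cinner_def Let_def by simp
qed

lemma hadamard_conj_outer:
  "hadamard_conj n (outer u) x x' =
    mat_vec (2^n) (hadamard_n n) u x * cnj (mat_vec (2^n) (hadamard_n n) u x')"
  unfolding hadamard_conj_def outer_def mat_vec_def cnj_sum sum_product by (simp add: mult_ac)

lemma density_outer:
  assumes "cinner (2^n) u u = 1"
  shows "density n (outer u)"
  unfolding density_def Let_def
proof (intro conjI allI)
  fix v :: "nat \<Rightarrow> complex"
  have "(\<Sum>i<2^n. \<Sum>j<2^n. cnj (v i) * outer u i j * v j) = cinner (2^n) v u * cnj (cinner (2^n) v u)"
    unfolding outer_def cinner_def cnj_sum sum_product by (simp add: mult_ac)
  also have "\<dots> = complex_of_real ((cmod (cinner (2^n) v u))\<^sup>2)"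
    by (rule complex_norm_square[symmetric])
  finally have q: "(\<Sum>i<2^n. \<Sum>j<2^n. cnj (v i) * outer u i j * v j) = complex_of_real ((cmod (cinner (2^n) v u))\<^sup>2)" .
  show "Im (\<Sum>i<2^n. \<Sum>j<2^n. cnj (v i) * outer u i j * v j) = 0"
    "0 \<le> Re (\<Sum>i<2^n. \<Sum>j<2^n. cnj (v i) * outer u i j * v j)"
    unfolding q by simp_all
next
  show "(\<Sum>i<2^n. outer u i i) = 1"
    using assms unfolding outer_def cinner_def by (simp add: mult.commute)
qed

definition ket0 :: "nat \<Rightarrow> complex" where
  "ket0 = (\<lambda>a. if a = 0 then 1 else 0)"

definition ket_plus :: "nat \<Rightarrow> nat \<Rightarrow> complex" where
  "ket_plus n = (\<lambda>a. 1 / complex_of_real (sqrt (2^n)))"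

lemma of_real_sqrt_pow2_square:
  "complex_of_real (sqrt (2^n)) * complex_of_real (sqrt (2^n)) = 2^n"
  by (simp flip: of_real_mult)

lemma hadamard_n_ket0: "mat_vec (2^n) (hadamard_n n) ket0 = ket_plus n"
  unfolding mat_vec_def fun_eq_iff
  by (subst sum_supported_at_0) (simp_all add: ket0_def ket_plus_def hadamard_n_def bit_of_def)

lemma hadamard_n_ket_plus: "mat_vec (2^n) (hadamard_n n) (ket_plus n) 0 = 1"
  unfolding mat_vec_def ket_plus_def hadamard_n_def bit_of_def
  by (simp add: of_real_sqrt_pow2_square flip: power_add)

lemma cinner_ket0_ket0: "cinner (2^n) ket0 ket0 = 1"
  unfolding cinner_def by (subst sum_supported_at_0) (simp_all add: ket0_def)

lemma cinner_ket_plus_ket_plus: "cinner (2^n) (ket_plus n) (ket_plus n) = 1"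
  unfolding cinner_def ket_plus_def by (simp add: of_real_sqrt_pow2_square)

lemma cinner_ket0_ket_plus: "cinner (2^n) ket0 (ket_plus n) = 1 / complex_of_real (sqrt (2^n))"
  unfolding cinner_def by (subst sum_supported_at_0) (simp_all add: ket0_def ket_plus_def)

lemma norm1_ket0: "norm1 (2^n) ket0 = 1"
  unfolding norm1_def by (subst sum_supported_at_0) (simp_all add: ket0_def)

lemma norm1_ket_plus: "norm1 (2^n) (ket_plus n) = sqrt (2^n)"
  unfolding norm1_def ket_plus_def by (simp add: norm_divide real_div_sqrt)

lemma cinner_scale_left: "cinner d (\<lambda>i. a * f i) g = cnj a * cinner d f g"
  unfolding cinner_def sum_distrib_left by (simp add: mult_ac)

lemma cinner_scale_right: "cinner d f (\<lambda>i. b * g i) = b * cinner d f g"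
  unfolding cinner_def sum_distrib_left by (simp add: mult_ac)

locale exact_hadamard_channel =
  fixes n m :: nat and \<gamma> :: "nat \<Rightarrow> complex" and W :: cmat
  assumes ancilla_normalized: "cinner (2^m) \<gamma> \<gamma> = 1"
    and unitary: "preserves_cinner (2^(n+m)) W"
    and implements_hadamard: "\<And>\<rho> x x'. density n \<rho> \<Longrightarrow> x < 2^n \<Longrightarrow> x' < 2^n \<Longrightarrow>
      channel n m \<gamma> W \<rho> x x' = hadamard_conj n \<rho> x x'"
begin

definition out0 :: "nat \<Rightarrow> complex" where
  "out0 = mat_vec (2^(n+m)) W (vec_tensor (2^m) ket0 \<gamma>)"

definition out_plus :: "nat \<Rightarrow> complex" where
  "out_plus = mat_vec (2^(n+m)) W (vec_tensor (2^m) (ket_plus n) \<gamma>)"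

lemma out0_block_gram:
  assumes "x < 2^n" "x' < 2^n"
  shows "cinner (2^m) (\<lambda>y. out0 (x' * 2^m + y)) (\<lambda>y. out0 (x * 2^m + y)) = 1 / 2^n"
proof -
  have "cinner (2^m) (\<lambda>y. out0 (x' * 2^m + y)) (\<lambda>y. out0 (x * 2^m + y))
      = hadamard_conj n (outer ket0) x x'"
    unfolding out0_def channel_outer[symmetric]
    using implements_hadamard[OF density_outer[OF cinner_ket0_ket0] assms] .
  also have "\<dots> = 1 / 2^n"
    unfolding hadamard_conj_outer hadamard_n_ket0 ket_plus_def
    by (simp add: of_real_sqrt_pow2_square)
  finally show ?thesis .
qed

lemma out0_block_eq:
  assumes "x < 2^n" "y < 2^m"
  shows "out0 (x * 2^m + y) = out0 y"
proof -
  have gram: "cinner (2^m) (\<lambda>y. out0 (a * 2^m + y)) (\<lambda>y. out0 (b * 2^m + y)) = 1 / 2^n"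
    if "a < 2^n" "b < 2^n" for a b
    using out0_block_gram[OF that(2) that(1)] .
  have "0 < (2::nat)^n"
    by simp
  from eq_if_cinner_eq[OF gram[OF assms(1) assms(1)] gram[OF this this] gram[OF assms(1) this] _ assms(2)]
  show ?thesis
    by simp
qed

lemma out_plus_block0_norm: "cinner (2^m) out_plus out_plus = 1"
proof -
  have "cinner (2^m) out_plus out_plus = hadamard_conj n (outer (ket_plus n)) 0 0"
    using channel_outer[where u = "ket_plus n" and x = 0 and x' = 0]
      implements_hadamard[OF density_outer[OF cinner_ket_plus_ket_plus], of 0 0]
    unfolding out_plus_def by simp
  then show ?thesis
    unfolding hadamard_conj_outer hadamard_n_ket_plus by simp
qed

lemma out_plus_norm: "cinner (2^(n+m)) out_plus out_plus = 1"
  using unitary ancilla_normalized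
  unfolding out_plus_def preserves_cinner_def power_add
  by (simp add: cinner_vec_tensor cinner_ket_plus_ket_plus)

lemma out_plus_block_zero:
  assumes "0 < x" "x < 2^n" "y < 2^m"
  shows "out_plus (x * 2^m + y) = 0"
proof -
  define F where "F x = (\<Sum>y<2^m. (cmod (out_plus (x * 2^m + y)))\<^sup>2)" for x
  have "F 0 + (\<Sum>x\<in>{..<2^n} - {0}. F x) = (\<Sum>x<2^n. F x)"
    by (rule sum.remove[symmetric]) simp_all
  also have "\<dots> = F 0"
  proof -
    have "(\<Sum>i<2^n * 2^m. (cmod (out_plus i))\<^sup>2) = 1" "(\<Sum>y<2^m. (cmod (out_plus y))\<^sup>2) = 1"
      using out_plus_norm out_plus_block0_norm unfolding cinner_self power_add of_real_eq_1_iff .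
    then show ?thesis
      unfolding F_def sum_lessThan_mult by simp
  qed
  finally have "(\<Sum>x\<in>{..<2^n} - {0}. F x) = 0"
    by simp
  then have "F x = 0"
    using assms by (simp add: sum_nonneg_eq_0_iff F_def sum_nonneg)
  then show ?thesis
    using assms by (simp add: sum_nonneg_eq_0_iff F_def)
qed

lemma cinner_out0_out_plus: "cinner (2^m) out0 out_plus = 1 / complex_of_real (sqrt (2^n))"
proof -
  have "cinner (2^m) out0 out_plus = cinner (2^(n+m)) out0 out_plus"
    unfolding cinner_def power_add
    by (rule sum_lessThan_mult_first_block[symmetric]) (simp_all add: out_plus_block_zero)
  also have "\<dots> = 1 / complex_of_real (sqrt (2^n))"
    using unitary ancilla_normalized
    unfolding out0_def out_plus_def preserves_cinner_def power_add
    by (simp add: cinner_vec_tensor cinner_ket0_ket_plus)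
  finally show ?thesis .
qed

lemma out_plus_eq_scaled_out0:
  assumes "y < 2^m"
  shows "out_plus y = sqrt (2^n) * out0 y"
proof (rule eq_if_cinner_eq[where c = 1])
  let ?s = "complex_of_real (sqrt (2^n))"
  show "cinner (2^m) out_plus out_plus = 1"
    by (rule out_plus_block0_norm)
  show "cinner (2^m) (\<lambda>y. ?s * out0 y) (\<lambda>y. ?s * out0 y) = 1"
    using out0_block_gram[of 0 0]
    by (simp add: cinner_scale_left cinner_scale_right of_real_sqrt_pow2_square)
  have "cinner (2^m) out_plus out0 = 1 / ?s"
    using cnj_cinner[of "2^m" out0 out_plus] cinner_out0_out_plus by simp
  then show "cinner (2^m) out_plus (\<lambda>y. ?s * out0 y) = 1"
    by (simp add: cinner_scale_right)
qed (use assms in simp_all)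

lemma norm1_out0: "norm1 (2^(n+m)) out0 = 2^n * norm1 (2^m) out0"
  unfolding norm1_def power_add sum_lessThan_mult by (simp add: out0_block_eq)

lemma norm1_out_plus: "norm1 (2^(n+m)) out_plus = sqrt (2^n) * norm1 (2^m) out0"
  unfolding norm1_def power_add
  by (subst sum_lessThan_mult_first_block)
    (simp_all add: out_plus_block_zero out_plus_eq_scaled_out0 norm_mult sum_distrib_left)

lemma norm1_out0_pos: "0 < norm1 (2^m) out0"
proof (rule ccontr)
  assume "\<not> 0 < norm1 (2^m) out0"
  moreover have "0 \<le> norm1 (2^m) out0"
    unfolding norm1_def by (simp add: sum_nonneg)
  ultimately have "\<forall>y<2^m. out0 y = 0"
    unfolding norm1_def by (simp add: sum_nonneg_eq_0_iff)
  then have "cinner (2^m) out0 out0 = 0"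
    by (simp add: cinner_def)
  then show False
    using out0_block_gram[of 0 0] by simp
qed

theorem pow2_le_l1_distortion_square:
  assumes "l1_distortion_le (2^(n+m)) W c"
  shows "2^n \<le> c^2"
proof -
  define G L where "G = norm1 (2^m) \<gamma>" and "L = norm1 (2^m) out0"
  have "norm1 (2^(n+m)) out0 \<le> c * norm1 (2^(n+m)) (vec_tensor (2^m) ket0 \<gamma>)"
    using assms unfolding l1_distortion_le_def out0_def by blast
  then have upper: "2^n * L \<le> c * G"
    unfolding norm1_out0 unfolding power_add norm1_vec_tensor norm1_ket0 G_def L_def by simp
  have "norm1 (2^(n+m)) (vec_tensor (2^m) (ket_plus n) \<gamma>) \<le> c * norm1 (2^(n+m)) out_plus"
    using assms unfolding l1_distortion_le_def out_plus_def by blast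
  then have "sqrt (2^n) * G \<le> sqrt (2^n) * (c * L)"
    unfolding norm1_out_plus unfolding power_add norm1_vec_tensor norm1_ket_plus G_def L_def
    by (simp add: mult_ac)
  then have lower: "G \<le> c * L"
    by simp
  have "0 < L"
    unfolding L_def by (rule norm1_out0_pos)
  then have "0 < 2^n * L"
    by simp
  then have "0 < c * G"
    using upper by linarith
  moreover have "0 \<le> G"
    unfolding G_def norm1_def by (simp add: sum_nonneg)
  ultimately have "0 < c"
    by (auto simp: zero_less_mult_iff)
  have "2^n * L \<le> c * G"
    by (rule upper)
  also have "\<dots> \<le> c * (c * L)"
    using lower \<open>0 < c\<close> by (simp add: mult_left_mono)
  also have "\<dots> = c^2 * L"
    by (simp add: power2_eq_square)
  finally have "2^n * L \<le> c^2 * L" .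
  then show ?thesis
    using \<open>0 < L\<close> by simp
qed

end

theorem theorem3:
  fixes n k m :: nat and \<gamma> :: "nat \<Rightarrow> complex" and U0 :: cmat
    and layers :: "(cmat \<times> cmat) list"
  assumes "k < n"
    and "length layers = k"
    and "(\<Sum>y<2^m. (cmod (\<gamma> y))\<^sup>2) = 1"
    and "incoherent (n + m) U0"
    and "\<forall>p \<in> set layers. gen_ctrl_hadamard (n + m) (fst p) \<and> incoherent (n + m) (snd p)"
  shows "\<exists>\<rho>. density n \<rho> \<and>
           (\<exists>x<2^n. \<exists>x'<2^n.
              channel n m \<gamma> (circ (2^(n+m)) U0 layers) \<rho> x x' \<noteq> hadamard_conj n \<rho> x x')"
proof (rule ccontr)
  let ?W = "circ (2^(n+m)) U0 layers"
  assume exact: "\<not> ?thesis"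
  have "exact_hadamard_channel n m \<gamma> ?W"
  proof
    show "cinner (2^m) \<gamma> \<gamma> = 1"
      using assms(3) by (simp add: cinner_self)
    show "preserves_cinner (2^(n+m)) ?W"
      using circ_preserves_cinner[OF incoherent_preserves_cinner[OF assms(4)] assms(5)] .
    show "channel n m \<gamma> ?W \<rho> x x' = hadamard_conj n \<rho> x x'"
      if "density n \<rho>" "x < 2^n" "x' < 2^n" for \<rho> x x'
      using exact that by blast
  qed
  moreover have "l1_distortion_le (2^(n+m)) ?W (sqrt 2 ^ k * 1)"
    using circ_l1_distortion_le[OF incoherent_l1_distortion_le[OF assms(4)] _ assms(5)] assms(2)
    by simp
  ultimately have "2^n \<le> (sqrt 2 ^ k * 1)^2"
    by (rule exact_hadamard_channel.pow2_le_l1_distortion_square)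
  also have "\<dots> = 2^k"
    by (simp flip: power_mult power_mult_distrib add: power2_eq_square)
  finally show False
    using assms(1) by simp
qed

end
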